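(* Let $d\ge0$ and let $G_d=\exp(\mathfrak g_d)$ be the adjoint group of $\mathfrak g_d$ acting on $V_d$. Then for every $n=0,1,\dots,d+1$, $$G_d.\,e_1z^n=\{x\in V_d:\mathrm{min.deg}\,x=n\}\ \bigl(=(V_d)_{(s)},\ s=2(d+1-n)\bigr).$$
   Context: $T=\mathbb C^2=\mathbb C\langle e_1,e_2\rangle$ with the standard action of $\mathfrak{sl}_2$; $V_d=T\otimes\mathbb C[z]/(z^{d+1})$ and $\mathfrak g_d=\mathfrak{sl}_2\otimes\mathbb C[z]/(z^{d+1})$ acting on $V_d$ by $(\xi z^a)(vz^b)=(\xi v)z^{a+b}$. For $x=\sum_m x_mz^m\in V_d$, $\mathrm{min.deg}\,x=\min\{m:x_m\neq0\}$ ($=d+1$ if $x=0$). $(V_d)_{(s)}$ is the set of $x\in V_d$ with $\dim\mathfrak g_d.x=s$. *)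

theory Defs
  imports "HOL-Analysis.Analysis" "HOL-Library.Function_Algebras"
begin

text \<open>Elements of V_d = T tensor C[z]/(z^(d+1)), T = C^2, are coefficient sequences
  x :: nat => complex^2 (x m is the coefficient of z^m) vanishing above degree d.
  Elements of g_d = sl_2 tensor C[z]/(z^(d+1)) are sequences of traceless 2x2 matrices
  vanishing above degree d.\<close>

type_synonym vd = "nat \<Rightarrow> complex ^ 2"
type_synonym gdel = "nat \<Rightarrow> complex ^ 2 ^ 2"

definition Vd :: "nat \<Rightarrow> vd set" where
  "Vd d = {x. \<forall>m>d. x m = 0}"

definition gd :: "nat \<Rightarrow> gdel set" where
  "gd d = {\<xi>. (\<forall>m>d. \<xi> m = 0) \<and> (\<forall>m. \<xi> m $ 1 $ 1 + \<xi> m $ 2 $ 2 = 0)}"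

text \<open>(xi z^a)(v z^b) = (xi v) z^(a+b), truncated modulo z^(d+1).\<close>
definition act :: "nat \<Rightarrow> gdel \<Rightarrow> vd \<Rightarrow> vd" where
  "act d \<xi> x = (\<lambda>m. if m \<le> d then (\<Sum>a\<le>m. \<xi> a *v x (m - a)) else 0)"

definition expact :: "nat \<Rightarrow> gdel \<Rightarrow> vd \<Rightarrow> vd" where
  "expact d \<xi> x = (\<lambda>m. \<Sum>k. (inverse (fact k) :: complex) *s (((act d \<xi>) ^^ k) x) m)"

text \<open>G_d = exp(g_d): the group generated by the exponentials exp(xi), xi in g_d
  (closed under inverses since exp(xi)^-1 = exp(-xi)).\<close>
inductive_set Gd :: "nat \<Rightarrow> (vd \<Rightarrow> vd) set" for d :: nat where
  Gd_id: "id \<in> Gd d"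
| Gd_exp: "g \<in> Gd d \<Longrightarrow> \<xi> \<in> gd d \<Longrightarrow> expact d \<xi> \<circ> g \<in> Gd d"

definition orbit :: "nat \<Rightarrow> vd \<Rightarrow> vd set" where
  "orbit d v = {g v | g. g \<in> Gd d}"

definition e1 :: "complex ^ 2" where
  "e1 = (\<chi> i. if i = 1 then 1 else 0)"

text \<open>e_1 z^n in V_d (equal to 0 when n > d).\<close>
definition e1z :: "nat \<Rightarrow> nat \<Rightarrow> vd" where
  "e1z d n = (\<lambda>m. if m = n \<and> n \<le> d then e1 else 0)"

definition mindeg :: "nat \<Rightarrow> vd \<Rightarrow> nat" where
  "mindeg d x = (if \<exists>m\<le>d. x m \<noteq> 0 then (LEAST m. x m \<noteq> 0) else d + 1)"

definition cdim :: "vd set \<Rightarrow> nat" where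
  "cdim S = vector_space.dim (\<lambda>(c::complex) (x::vd). (\<lambda>m. c *s x m)) S"

definition gdot :: "nat \<Rightarrow> vd \<Rightarrow> vd set" where
  "gdot d x = {act d \<xi> x | \<xi>. \<xi> \<in> gd d}"

definition Vs :: "nat \<Rightarrow> nat \<Rightarrow> vd set" where
  "Vs d s = {x \<in> Vd d. cdim (gdot d x) = s}"

end

theory Submission
  imports Defs
begin

text \<open>
  Everything is decided by the leading coefficient. Write \<open>x = \<Sum> x\<^sub>m z\<^sup>m\<close> with
  \<open>n = min.deg x\<close>. An exponential \<open>exp(\<xi>)\<close>, \<open>\<xi> = \<Sum> \<xi>\<^sub>a z\<^sup>a\<close>, keeps the coefficients
  below degree \<open>n\<close> zero and multiplies \<open>x\<^sub>n\<close> by the invertible matrix \<open>exp(\<xi>\<^sub>0)\<close>, so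
  \<open>G\<^sub>d\<close> preserves \<open>min.deg\<close>. Conversely, for a nilpotent \<open>N\<close> the exponential of \<open>N z\<^sup>k\<close> is
  \<open>1 + N z\<^sup>k\<close>: with \<open>k = 0\<close> two such maps move \<open>e\<^sub>1\<close> to any nonzero vector, and with
  \<open>k \<ge> 1\<close> they change the coefficient of degree \<open>n + k\<close> by an arbitrary vector without
  touching lower ones, so every \<open>x\<close> of minimal degree \<open>n\<close> is reached degree by degree.
  Finally \<open>\<g>\<^sub>d.x = z\<^sup>n V\<^sub>d\<close>, because \<open>sl\<^sub>2 v = \<complex>\<^sup>2\<close> for \<open>v \<noteq> 0\<close>; this space has
  dimension \<open>2(d + 1 - n)\<close>.
\<close>

section \<open>Exponentials and nilpotents in sl_2\<close>

lemma funpow_square_zero: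
  assumes "f (f u) = 0" "f 0 = 0" "2 \<le> k"
  shows "(f ^^ k) u = 0"
  using assms(3)
proof (induction k rule: dec_induct)
  case base then show ?case using assms(1) by (simp add: numeral_2_eq_2)
next
  case (step k) then show ?case using assms(2) by simp
qed

lemma suminf_exp_two_terms:
  fixes g :: "nat \<Rightarrow> complex^'n"
  assumes "\<And>k. 2 \<le> k \<Longrightarrow> g k = 0"
  shows "(\<Sum>k. (inverse (fact k) :: complex) *s g k) = g 0 + g 1"
proof -
  have "(\<Sum>k. (inverse (fact k) :: complex) *s g k) = (\<Sum>k\<in>{0,1}. (inverse (fact k) :: complex) *s g k)"
    using assms by (intro suminf_finite) auto
  then show ?thesis by simp
qed

lemma vec_sumsI:
  fixes f :: "nat \<Rightarrow> complex^'n"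
  assumes "\<And>i. (\<lambda>k. f k $ i) sums (L $ i)"
  shows "f sums L"
  using assms unfolding sums_def by (intro vec_tendstoI) (simp add: sum_component)

definition matrix_exp_apply :: "complex^'n^'n \<Rightarrow> complex^'n \<Rightarrow> complex^'n" where
  "matrix_exp_apply A u = (\<Sum>k. (inverse (fact k) :: complex) *s ((\<lambda>v. A *v v) ^^ k) u)"

lemma funpow_matrix_add:
  fixes A :: "complex^'n^'n"
  shows "((\<lambda>v. A *v v) ^^ k) (p + q) = ((\<lambda>v. A *v v) ^^ k) p + ((\<lambda>v. A *v v) ^^ k) q"
  by (induction k) (simp_all add: matrix_vector_right_distrib)

lemma funpow_matrix_eigenvector:
  fixes A :: "complex^'n^'n"
  assumes "A *v p = s *s p"
  shows "((\<lambda>v. A *v v) ^^ k) p = s ^ k *s p"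
  by (induction k) (simp_all add: vector_scalar_commute vector_smult_assoc assms)

lemma matrix_exp_eigenvector_sums:
  fixes A :: "complex^'n^'n"
  assumes "A *v p = s *s p"
  shows "(\<lambda>k. (inverse (fact k) :: complex) *s ((\<lambda>v. A *v v) ^^ k) p) sums (exp s *s p)"
proof (rule vec_sumsI)
  fix i
  have "(\<lambda>k. s ^ k /\<^sub>R fact k) sums exp s" by (rule exp_converges)
  then have "(\<lambda>k. inverse (fact k) * s ^ k * p $ i) sums (exp s * p $ i)"
    by (intro sums_mult2) (simp add: scaleR_conv_of_real field_simps)
  then show "(\<lambda>k. ((inverse (fact k) :: complex) *s ((\<lambda>v. A *v v) ^^ k) p) $ i) sums ((exp s *s p) $ i)"
    by (simp add: funpow_matrix_eigenvector[OF assms] mult.assoc)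
qed

lemma trace_2: "trace (A::'a::semiring_1^2^2) = A$1$1 + A$2$2"
  by (simp add: trace_def sum_2)

lemma traceless_matrix_square:
  fixes A :: "complex^2^2"
  assumes "trace A = 0"
  shows "A *v (A *v v) = (- det A) *s v"
proof -
  have "A$2$2 = - A$1$1" using assms by (simp add: trace_2 eq_neg_iff_add_eq_0 add.commute)
  then show ?thesis
    by (simp add: det_2 vec_eq_iff forall_2 matrix_vector_mult_def sum_2 algebra_simps)
qed

lemma matrix_exp_apply_square_zero:
  fixes A :: "complex^'n^'n"
  assumes "A *v (A *v u) = 0"
  shows "matrix_exp_apply A u = u + A *v u"
  unfolding matrix_exp_apply_def using assms
  by (intro trans[OF suminf_exp_two_terms]) (simp_all add: funpow_square_zero)

lemma matrix_exp_apply_eigenvectors: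
  fixes A :: "complex^'n^'n"
  assumes "A *v p = s *s p" "A *v q = t *s q"
  shows "matrix_exp_apply A (p + q) = exp s *s p + exp t *s q"
  unfolding matrix_exp_apply_def funpow_matrix_add vector_add_ldistrib
  by (intro sums_unique[symmetric] sums_add matrix_exp_eigenvector_sums assms)

lemma matrix_exp_apply_nonzero:
  fixes A :: "complex^2^2"
  assumes tr: "trace A = 0" and u: "u \<noteq> 0"
  shows "matrix_exp_apply A u \<noteq> 0"
proof (cases "det A = 0")
  case True
  then have A2: "A *v (A *v v) = 0" for v using traceless_matrix_square[OF tr] by simp
  have "u + A *v u \<noteq> 0"
  proof
    assume h: "u + A *v u = 0"
    have "A *v u = A *v (u + A *v u)" using A2 by (simp add: matrix_vector_right_distrib)
    then show False using h u by simp
  qed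
  then show ?thesis using matrix_exp_apply_square_zero[OF A2] by simp
next
  case False
  define c where "c = - det A"
  have A2: "A *v (A *v v) = c *s v" for v unfolding c_def by (rule traceless_matrix_square[OF tr])
  \<comment> \<open>\<open>u\<close> splits into eigenvectors of \<open>A\<close> for the eigenvalues \<open>\<plusminus>s\<close>,
    where \<open>s\<^sup>2 = c \<noteq> 0\<close>\<close>
  define s where "s = csqrt c"
  have ss: "s * s = c" unfolding s_def by (metis power2_csqrt power2_eq_square)
  have s0: "s \<noteq> 0" using ss False c_def by auto
  define p where "p = (1/2) *s (u + (1/s) *s (A *v u))"
  define q where "q = (1/2) *s (u - (1/s) *s (A *v u))"
  have Ap: "A *v p = s *s p" and Aq: "A *v q = (- s) *s q"
    unfolding p_def q_def using A2[of u] s0 ss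
    by (simp_all add: vec_eq_iff forall_2 vector_scalar_commute matrix_vector_right_distrib
        matrix_vector_mult_diff_distrib field_simps)
  have u_pq: "u = p + q" unfolding p_def q_def by (simp add: vec_eq_iff)
  have "exp s *s p + exp (- s) *s q \<noteq> 0"
  proof
    assume h: "exp s *s p + exp (- s) *s q = 0"
    then have "A *v (exp s *s p + exp (- s) *s q) = 0" by simp
    then have "s *s (exp s *s p - exp (- s) *s q) = 0"
      by (simp add: matrix_vector_right_distrib vector_scalar_commute Ap Aq vec_eq_iff algebra_simps)
    then have "exp s *s p = exp (- s) *s q" using s0 by (simp add: vec_eq_iff)
    with h have "p = 0" "q = 0" by (simp_all add: vec_eq_iff)
    then show False using u_pq u by simp
  qed
  then show ?thesis using matrix_exp_apply_eigenvectors[OF Ap Aq] u_pq by simp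
qed

definition det2 :: "complex^2 \<Rightarrow> complex^2 \<Rightarrow> complex" where
  "det2 u v = u$1 * v$2 - u$2 * v$1"

lemma trace_nilpotent:
  fixes N :: "complex^2^2"
  assumes "N ** N = 0"
  shows "trace N = 0"
  unfolding trace_2
proof (rule ccontr)
  assume tr: "N$1$1 + N$2$2 \<noteq> 0"
  have e: "N$i$1 * N$1$j + N$i$2 * N$2$j = 0" for i j
    using arg_cong[OF assms, of "\<lambda>M. M$i$j"] by (simp add: matrix_matrix_mult_def sum_2)
  have "N$1$2 * (N$1$1 + N$2$2) = 0" "N$2$1 * (N$1$1 + N$2$2) = 0"
    using e[of 1 2] e[of 2 1] by (simp_all add: algebra_simps)
  then have "N$1$2 = 0" "N$2$1 = 0" using tr by simp_all
  then show False using e[of 1 1] e[of 2 2] tr by simp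
qed

lemma nilpotent_maps_to:
  assumes "det2 u v \<noteq> 0"
  shows "\<exists>N::complex^2^2. N ** N = 0 \<and> N *v u = v"
proof -
  \<comment> \<open>the rank one matrix \<open>N = v w\<^sup>T\<close> with \<open>w \<bullet> v = 0\<close> and \<open>w \<bullet> u = 1\<close>\<close>
  define D where "D = det2 u v"
  define w :: "complex^2" where "w = (\<chi> i. if i = 1 then v$2 / D else - v$1 / D)"
  define N :: "complex^2^2" where "N = (\<chi> i j. v$i * w$j)"
  have D: "D \<noteq> 0" using assms by (simp add: D_def)
  have "w$1 * u$1 + w$2 * u$2 = det2 u v / D" using D by (simp add: w_def det2_def field_simps)
  then have wu: "w$1 * u$1 + w$2 * u$2 = 1" using D by (simp add: D_def)
  have wv: "w$1 * v$1 + w$2 * v$2 = 0" using D by (simp add: w_def field_simps)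
  have "(N ** N)$i$j = v$i * w$j * (w$1 * v$1 + w$2 * v$2)" for i j
    by (simp add: N_def matrix_matrix_mult_def sum_2 algebra_simps)
  moreover have "(N *v u)$i = v$i * (w$1 * u$1 + w$2 * u$2)" for i
    by (simp add: N_def matrix_vector_mult_def sum_2 algebra_simps)
  ultimately have "N ** N = 0" "N *v u = v" using wu wv by (simp_all add: vec_eq_iff)
  then show ?thesis by blast
qed

lemma nonzero_vec2_cases:
  fixes u :: "complex^2"
  assumes "u \<noteq> 0"
  shows "u$1 \<noteq> 0 \<or> u$2 \<noteq> 0"
  using assms by (auto simp: vec_eq_iff forall_2)

lemma sum_of_nilpotents_maps_to:
  assumes u: "u \<noteq> 0"
  shows "\<exists>N1 N2::complex^2^2. N1 ** N1 = 0 \<and> N2 ** N2 = 0 \<and> N1 *v u + N2 *v u = v"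
proof (cases "det2 u v = 0")
  case False
  then obtain N where "N ** N = 0" "N *v u = v" using nilpotent_maps_to by blast
  then show ?thesis by (intro exI[of _ N] exI[of _ 0]) simp
next
  case True
  define z :: "complex^2" where "z = axis (if u$2 = 0 then 2 else 1) 1"
  have z: "det2 u z \<noteq> 0"
    using nonzero_vec2_cases[OF u] by (auto simp: z_def det2_def axis_def)
  moreover have "det2 u (v - z) = det2 u v - det2 u z" by (simp add: det2_def algebra_simps)
  ultimately have "det2 u (v - z) \<noteq> 0" using True by simp
  then obtain N1 N2 where "N1 ** N1 = 0" "N1 *v u = z" "N2 ** N2 = 0" "N2 *v u = v - z"
    using nilpotent_maps_to z by metis
  then show ?thesis by (intro exI[of _ N1] exI[of _ N2]) simp
qed

lemma traceless_maps_to: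
  assumes "u \<noteq> 0"
  shows "\<exists>B::complex^2^2. trace B = 0 \<and> B *v u = v"
proof -
  obtain N1 N2 where "N1 ** N1 = 0" "N2 ** N2 = 0" "N1 *v u + N2 *v u = v"
    using sum_of_nilpotents_maps_to[OF assms] by blast
  then have "trace (N1 + N2) = 0" "(N1 + N2) *v u = v"
    by (simp_all add: trace_add trace_nilpotent matrix_vector_mult_add_rdistrib)
  then show ?thesis by blast
qed

lemma unipotent_maps_e1_to:
  assumes w: "w \<noteq> 0"
  shows "\<exists>N1 N2::complex^2^2. N1 ** N1 = 0 \<and> N2 ** N2 = 0
           \<and> (e1 + N1 *v e1) + N2 *v (e1 + N1 *v e1) = w"
proof (cases "w$2 = 0")
  case False
  then have "det2 e1 (w - e1) \<noteq> 0" by (simp add: det2_def e1_def)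
  then obtain N where "N ** N = 0" "N *v e1 = w - e1" using nilpotent_maps_to by blast
  then show ?thesis by (intro exI[of _ N] exI[of _ 0]) simp
next
  case True
  define e2 :: "complex^2" where "e2 = axis 2 1"
  have "det2 e1 e2 \<noteq> 0" by (simp add: det2_def e1_def e2_def axis_def)
  moreover have "det2 (e1 + e2) (w - (e1 + e2)) \<noteq> 0"
    using True nonzero_vec2_cases[OF w] by (simp add: det2_def e1_def e2_def axis_def algebra_simps)
  ultimately obtain N1 N2 where "N1 ** N1 = 0" "N1 *v e1 = e2"
    "N2 ** N2 = 0" "N2 *v (e1 + e2) = w - (e1 + e2)"
    using nilpotent_maps_to by metis
  then show ?thesis by (intro exI[of _ N1] exI[of _ N2]) simp
qed

section \<open>Minimal degree and the action of g_d\<close>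

definition zpow_Vd :: "nat \<Rightarrow> nat \<Rightarrow> vd set" where
  "zpow_Vd d n = {y \<in> Vd d. \<forall>j<n. y j = 0}"

lemma Vd_eqI:
  assumes "x \<in> Vd d" "y \<in> Vd d" "\<And>j. j \<le> d \<Longrightarrow> x j = y j"
  shows "x = y"
proof
  fix j show "x j = y j"
    using assms by (cases "j \<le> d") (auto simp: Vd_def)
qed

lemma mindeg_le: "mindeg d x \<le> d + 1"
  unfolding mindeg_def by (auto intro: Least_le[THEN order_trans])

lemma mindeg_eq_iff:
  assumes "x \<in> Vd d" "n \<le> d + 1"
  shows "mindeg d x = n \<longleftrightarrow> x \<in> zpow_Vd d n \<and> (n \<le> d \<longrightarrow> x n \<noteq> 0)"
proof (cases "\<exists>m\<le>d. x m \<noteq> 0")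
  case True
  then have "mindeg d x = (LEAST m. x m \<noteq> 0)" by (simp add: mindeg_def)
  moreover have "(LEAST m. x m \<noteq> 0) = n \<longleftrightarrow> (\<forall>j<n. x j = 0) \<and> x n \<noteq> 0"
  proof
    assume "(LEAST m. x m \<noteq> 0) = n"
    then show "(\<forall>j<n. x j = 0) \<and> x n \<noteq> 0"
      using True LeastI_ex[of "\<lambda>m. x m \<noteq> 0"] not_less_Least by blast
  next
    assume "(\<forall>j<n. x j = 0) \<and> x n \<noteq> 0"
    then show "(LEAST m. x m \<noteq> 0) = n" by (intro Least_equality) (auto simp: not_less[symmetric])
  qed
  moreover have "n \<le> d" if "\<forall>j<n. x j = 0"
    using True that by (meson le_trans not_less)
  ultimately show ?thesis using assms(1) by (auto simp: zpow_Vd_def)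
next
  case False
  then show ?thesis using assms by (auto simp: mindeg_def zpow_Vd_def)
qed

lemma mindeg_zpow_Vd:
  assumes "x \<in> Vd d"
  shows "x \<in> zpow_Vd d (mindeg d x)" and "mindeg d x \<le> d \<Longrightarrow> x (mindeg d x) \<noteq> 0"
  using mindeg_eq_iff[OF assms mindeg_le] by auto

lemma act_zpow_Vd: "x \<in> zpow_Vd d n \<Longrightarrow> act d \<xi> x \<in> zpow_Vd d n"
  by (simp add: act_def Vd_def zpow_Vd_def)

lemma act_leading:
  assumes "x \<in> zpow_Vd d n" "n \<le> d"
  shows "act d \<xi> x n = \<xi> 0 *v x n"
proof -
  have "(\<Sum>a\<le>n. \<xi> a *v x (n - a)) = (\<Sum>a\<le>n. if a = 0 then \<xi> 0 *v x n else 0)"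
    using assms(1) by (intro sum.cong) (auto simp: zpow_Vd_def)
  then show ?thesis using assms(2) by (simp add: act_def)
qed

lemma funpow_act_zpow_Vd: "x \<in> zpow_Vd d n \<Longrightarrow> (act d \<xi> ^^ k) x \<in> zpow_Vd d n"
  by (induction k) (simp_all add: act_zpow_Vd)

lemma funpow_act_leading:
  assumes "x \<in> zpow_Vd d n" "n \<le> d"
  shows "(act d \<xi> ^^ k) x n = ((\<lambda>v. \<xi> 0 *v v) ^^ k) (x n)"
  by (induction k) (simp_all add: act_leading[OF funpow_act_zpow_Vd[OF assms(1)] assms(2)])

lemma expact_zpow_Vd:
  assumes "x \<in> zpow_Vd d n"
  shows "expact d \<xi> x \<in> zpow_Vd d n"
  using funpow_act_zpow_Vd[OF assms] by (simp add: expact_def zpow_Vd_def Vd_def)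

lemma expact_leading:
  assumes "x \<in> zpow_Vd d n" "n \<le> d"
  shows "expact d \<xi> x n = matrix_exp_apply (\<xi> 0) (x n)"
  by (simp add: expact_def matrix_exp_apply_def funpow_act_leading[OF assms])

lemma expact_mindeg:
  assumes \<xi>: "\<xi> \<in> gd d" and x: "x \<in> Vd d"
  shows "expact d \<xi> x \<in> Vd d \<and> mindeg d (expact d \<xi> x) = mindeg d x"
proof -
  let ?n = "mindeg d x"
  have low: "expact d \<xi> x \<in> zpow_Vd d ?n"
    using expact_zpow_Vd mindeg_zpow_Vd(1)[OF x] by blast
  have "expact d \<xi> x ?n \<noteq> 0" if "?n \<le> d"
  proof -
    have "trace (\<xi> 0) = 0" using \<xi> by (simp add: gd_def trace_2)
    moreover have "x ?n \<noteq> 0" using mindeg_zpow_Vd(2)[OF x that] .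
    ultimately show ?thesis
      using matrix_exp_apply_nonzero expact_leading[OF mindeg_zpow_Vd(1)[OF x] that] by simp
  qed
  moreover have "expact d \<xi> x \<in> Vd d" using low by (simp add: zpow_Vd_def)
  ultimately show ?thesis using low mindeg_eq_iff[OF _ mindeg_le] by blast
qed

lemma Gd_mindeg:
  assumes "g \<in> Gd d" "x \<in> Vd d"
  shows "g x \<in> Vd d \<and> mindeg d (g x) = mindeg d x"
  using assms by (induction g rule: Gd.induct) (simp_all add: expact_mindeg)

definition zmonom :: "nat \<Rightarrow> complex^2^2 \<Rightarrow> gdel" where
  "zmonom k N = (\<lambda>a. if a = k then N else 0)"

lemma zmonom_in_gd: "trace N = 0 \<Longrightarrow> k \<le> d \<Longrightarrow> zmonom k N \<in> gd d"
  by (simp add: gd_def zmonom_def trace_2)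

lemma act_zmonom:
  "act d (zmonom k N) y = (\<lambda>m. if k \<le> m \<and> m \<le> d then N *v y (m - k) else 0)"
proof
  fix m
  have "(\<Sum>a\<le>m. zmonom k N a *v y (m - a)) = (\<Sum>a\<le>m. if a = k then N *v y (m - k) else 0)"
    by (intro sum.cong) (auto simp: zmonom_def)
  then show "act d (zmonom k N) y m = (if k \<le> m \<and> m \<le> d then N *v y (m - k) else 0)"
    by (simp add: act_def)
qed

lemma expact_zmonom:
  assumes "N ** N = 0"
  shows "expact d (zmonom k N) y = y + act d (zmonom k N) y"
proof
  fix m
  let ?f = "act d (zmonom k N)"
  have "?f (?f y) = 0" "?f 0 = 0"
    by (simp_all add: act_zmonom fun_eq_iff matrix_vector_mul_assoc assms)
  then have "(?f ^^ j) y m = 0" if "2 \<le> j" for j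
    using funpow_square_zero[of ?f y j] that by simp
  then show "expact d (zmonom k N) y m = (y + ?f y) m"
    unfolding expact_def by (subst suminf_exp_two_terms) simp_all
qed

lemma act_add: "act d (\<xi> + \<eta>) x = act d \<xi> x + act d \<eta> x"
  by (simp add: act_def fun_eq_iff matrix_vector_mult_add_rdistrib sum.distrib)

lemma gd_add: "\<xi> \<in> gd d \<Longrightarrow> \<eta> \<in> gd d \<Longrightarrow> \<xi> + \<eta> \<in> gd d"
  by (simp add: gd_def algebra_simps)

section \<open>The orbit of e_1 z^n\<close>

lemma orbit_refl: "v \<in> orbit d v"
  unfolding orbit_def by (auto intro: exI[of _ id] Gd_id)

lemma orbit_expact:
  assumes "y \<in> orbit d v" "\<xi> \<in> gd d"
  shows "expact d \<xi> y \<in> orbit d v"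
proof -
  obtain g where "g \<in> Gd d" "y = g v" using assms(1) by (auto simp: orbit_def)
  then have "expact d \<xi> \<circ> g \<in> Gd d" "expact d \<xi> y = (expact d \<xi> \<circ> g) v"
    using assms(2) Gd_exp by auto
  then show ?thesis unfolding orbit_def by blast
qed

lemma e1_nonzero: "e1 \<noteq> 0"
proof
  assume "e1 = 0"
  then have "e1 $ 1 = 0" by simp
  then show False by (simp add: e1_def)
qed

lemma mindeg_e1z:
  assumes "n \<le> d + 1"
  shows "e1z d n \<in> Vd d \<and> mindeg d (e1z d n) = n"
  using mindeg_eq_iff[OF _ assms] e1_nonzero by (simp add: e1z_def Vd_def zpow_Vd_def)

lemma orbit_subset_mindeg:
  assumes "n \<le> d + 1"
  shows "orbit d (e1z d n) \<subseteq> {x \<in> Vd d. mindeg d x = n}"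
  using Gd_mindeg mindeg_e1z[OF assms] by (auto simp: orbit_def)

lemma orbit_leading_coeff:
  assumes "n \<le> d" "w \<noteq> 0"
  shows "\<exists>y\<in>orbit d (e1z d n). y n = w"
proof -
  obtain N1 N2 where N: "N1 ** N1 = 0" "N2 ** N2 = 0"
    "(e1 + N1 *v e1) + N2 *v (e1 + N1 *v e1) = w"
    using unipotent_maps_e1_to[OF assms(2)] by blast
  define y1 where "y1 = expact d (zmonom 0 N1) (e1z d n)"
  define y2 where "y2 = expact d (zmonom 0 N2) y1"
  have "y2 \<in> orbit d (e1z d n)"
    unfolding y2_def y1_def using N(1,2) trace_nilpotent
    by (intro orbit_expact orbit_refl zmonom_in_gd) simp_all
  moreover have "y2 n = w"
    using N assms(1) by (simp add: y2_def y1_def expact_zmonom act_zmonom e1z_def)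
  ultimately show ?thesis by blast
qed

lemma orbit_adjust_coeff:
  assumes y: "y \<in> orbit d (e1z d n)" and k: "0 < k" "n + k \<le> d"
  shows "\<exists>y'\<in>orbit d (e1z d n). (\<forall>j<n+k. y' j = y j) \<and> y' (n + k) = y (n + k) + v"
proof -
  have "y \<in> Vd d \<and> mindeg d y = n" using y orbit_subset_mindeg[of n d] k by auto
  then have low: "\<And>j. j < n \<Longrightarrow> y j = 0" and yn: "y n \<noteq> 0"
    using mindeg_zpow_Vd[of y d] k by (auto simp: zpow_Vd_def)
  obtain N1 N2 where N: "N1 ** N1 = 0" "N2 ** N2 = 0" "N1 *v y n + N2 *v y n = v"
    using sum_of_nilpotents_maps_to[OF yn] by blast
  \<comment> \<open>\<open>exp(N z\<^sup>k) = 1 + N z\<^sup>k\<close> with \<open>k \<ge> 1\<close> fixes the degrees below \<open>n + k\<close>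
    and adds \<open>N y\<^sub>n\<close> in degree \<open>n + k\<close>\<close>
  define y1 where "y1 = expact d (zmonom k N1) y"
  define y2 where "y2 = expact d (zmonom k N2) y1"
  have y2: "y2 \<in> orbit d (e1z d n)"
    unfolding y2_def y1_def using N(1,2) trace_nilpotent k
    by (intro orbit_expact y zmonom_in_gd) simp_all
  have y1: "y1 j = y j + (if k \<le> j \<and> j \<le> d then N1 *v y (j - k) else 0)" for j
    by (simp add: y1_def expact_zmonom[OF N(1)] act_zmonom)
  have y2_y1: "y2 j = y1 j + (if k \<le> j \<and> j \<le> d then N2 *v y1 (j - k) else 0)" for j
    by (simp add: y2_def expact_zmonom[OF N(2)] act_zmonom)
  have y1_low: "y1 j = y j" if "j < n + k" for j
    using y1[of j] low[of "j - k"] that by auto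
  have "y2 j = y j" if "j < n + k" for j
    using y2_y1[of j] y1_low[of j] y1_low[of "j - k"] low[of "j - k"] that by auto
  moreover have "y2 (n + k) = y (n + k) + v"
    using y1 y2_y1 y1_low[of n] k N(3) by (simp add: algebra_simps)
  ultimately show ?thesis using y2 by blast
qed

lemma orbit_approx:
  assumes x: "x \<in> Vd d" "mindeg d x = n" and "n + K \<le> d"
  shows "\<exists>y\<in>orbit d (e1z d n). \<forall>j\<le>n+K. y j = x j"
  using assms(3)
proof (induction K)
  case 0
  then have "x n \<noteq> 0" using mindeg_zpow_Vd(2)[OF x(1)] x(2) by simp
  then obtain y where y: "y \<in> orbit d (e1z d n)" "y n = x n" using orbit_leading_coeff[of n d "x n"] 0 by auto
  have "y \<in> Vd d \<and> mindeg d y = n" using y(1) orbit_subset_mindeg[of n d] 0 by auto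
  then have "y \<in> zpow_Vd d n" using mindeg_zpow_Vd(1) by blast
  moreover have "x \<in> zpow_Vd d n" using mindeg_zpow_Vd(1)[OF x(1)] x(2) by simp
  ultimately have "y j = x j" if "j \<le> n" for j
    using that y(2) by (cases "j = n") (simp_all add: zpow_Vd_def)
  then show ?case using y(1) by auto
next
  case (Suc K)
  then obtain y where y: "y \<in> orbit d (e1z d n)" "\<forall>j\<le>n+K. y j = x j" by auto
  obtain y' where y': "y' \<in> orbit d (e1z d n)" "\<forall>j<n + Suc K. y' j = y j"
    "y' (n + Suc K) = y (n + Suc K) + (x (n + Suc K) - y (n + Suc K))"
    using orbit_adjust_coeff[OF y(1) _ Suc.prems] by blast
  have "y' j = x j" if "j \<le> n + Suc K" for j
    using that y'(2,3) y(2) by (cases "j = n + Suc K") auto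
  then show ?case using y'(1) by blast
qed

lemma orbit_supset_mindeg:
  assumes "n \<le> d + 1"
  shows "{x \<in> Vd d. mindeg d x = n} \<subseteq> orbit d (e1z d n)"
proof
  fix x assume "x \<in> {x \<in> Vd d. mindeg d x = n}"
  then have x: "x \<in> Vd d" "mindeg d x = n" by simp_all
  show "x \<in> orbit d (e1z d n)"
  proof (cases "n \<le> d")
    case True
    then obtain y where y: "y \<in> orbit d (e1z d n)" "\<forall>j\<le>d. y j = x j"
      using orbit_approx[OF x, of "d - n"] by auto
    then have "y \<in> Vd d" using orbit_subset_mindeg assms by blast
    then have "y = x" using Vd_eqI x(1) y(2) by blast
    then show ?thesis using y(1) by simp
  next
    case False
    then have "n = d + 1" using assms by simp
    moreover have "e1z d n \<in> Vd d" using mindeg_e1z assms by blast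
    ultimately have "x = e1z d n"
      using mindeg_zpow_Vd(1)[OF x(1)] x by (intro Vd_eqI) (auto simp: zpow_Vd_def e1z_def)
    then show ?thesis using orbit_refl by simp
  qed
qed

section \<open>The tangent space g_d.x\<close>

lemma gdot_add:
  assumes "y \<in> gdot d x" "y' \<in> gdot d x"
  shows "y + y' \<in> gdot d x"
proof -
  obtain \<xi> \<eta> where "\<xi> \<in> gd d" "\<eta> \<in> gd d" "y = act d \<xi> x" "y' = act d \<eta> x"
    using assms by (auto simp: gdot_def)
  then have "\<xi> + \<eta> \<in> gd d" "y + y' = act d (\<xi> + \<eta>) x" by (simp_all add: gd_add act_add)
  then show ?thesis unfolding gdot_def by blast
qed

lemma act_zmonom_shift:
  assumes "x \<in> zpow_Vd d n" "n \<le> k"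
  shows "act d (zmonom (k - n) B) x \<in> zpow_Vd d k"
    and "k \<le> d \<Longrightarrow> act d (zmonom (k - n) B) x k = B *v x n"
proof -
  have "x (j - (k - n)) = 0" if "k - n \<le> j" "j < k" for j
    using assms that by (simp add: zpow_Vd_def)
  then show "act d (zmonom (k - n) B) x \<in> zpow_Vd d k"
    by (simp add: zpow_Vd_def Vd_def act_zmonom)
  show "k \<le> d \<Longrightarrow> act d (zmonom (k - n) B) x k = B *v x n"
    using assms(2) by (simp add: act_zmonom)
qed

lemma zpow_Vd_diff:
  assumes "y \<in> zpow_Vd d k" "r \<in> zpow_Vd d k" "y k = r k"
  shows "y - r \<in> zpow_Vd d (Suc k)"
  using assms by (auto simp: zpow_Vd_def Vd_def less_Suc_eq)

lemma zero_in_gdot: "0 \<in> gdot d x"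
proof -
  have "(0::gdel) \<in> gd d" "act d 0 x = 0" by (simp_all add: gd_def act_def fun_eq_iff)
  then show ?thesis unfolding gdot_def by force
qed

lemma zpow_Vd_subset_gdot:
  assumes x: "x \<in> Vd d" "mindeg d x = n" and "n \<le> m" "m \<le> d + 1"
  shows "zpow_Vd d m \<subseteq> gdot d x"
  using assms(4,3)
proof (induction m rule: inc_induct)
  case base
  have "zpow_Vd d (d + 1) = {0}"
    by (auto simp: zpow_Vd_def Vd_def fun_eq_iff intro: Vd_eqI)
  then show ?case using zero_in_gdot by simp
next
  case (step k)
  \<comment> \<open>\<open>(B z\<^sup>k\<^sup>-\<^sup>n).x\<close> has leading term \<open>B x\<^sub>n z\<^sup>k\<close>, and \<open>B x\<^sub>n\<close> is arbitrary
    as \<open>x\<^sub>n \<noteq> 0\<close>\<close>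
  have x_n: "x \<in> zpow_Vd d n" "x n \<noteq> 0" using mindeg_zpow_Vd[OF x(1)] x(2) step by simp_all
  show ?case
  proof
    fix y assume y: "y \<in> zpow_Vd d k"
    obtain B where B: "trace B = 0" "B *v x n = y k" using traceless_maps_to[OF x_n(2)] by blast
    define r where "r = act d (zmonom (k - n) B) x"
    have "r \<in> zpow_Vd d k" "y k = r k"
      using act_zmonom_shift[OF x_n(1)] step B(2) by (simp_all add: r_def)
    then have "y - r \<in> gdot d x" using zpow_Vd_diff[OF y] step.IH step.prems by auto
    moreover have "r \<in> gdot d x"
      using zmonom_in_gd[OF B(1), of "k - n" d] step unfolding gdot_def r_def by auto
    ultimately have "(y - r) + r \<in> gdot d x" by (rule gdot_add)
    then show "y \<in> gdot d x" by simp
  qed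
qed

lemma gdot_eq_zpow_Vd:
  assumes "x \<in> Vd d"
  shows "gdot d x = zpow_Vd d (mindeg d x)"
proof
  show "gdot d x \<subseteq> zpow_Vd d (mindeg d x)"
    using act_zpow_Vd mindeg_zpow_Vd(1)[OF assms] by (auto simp: gdot_def)
  show "zpow_Vd d (mindeg d x) \<subseteq> gdot d x"
    using zpow_Vd_subset_gdot[OF assms refl order_refl mindeg_le] .
qed

lemma sum_fun_apply: "(sum f A) x = (\<Sum>a\<in>A. f a x)"
  by (induction A rule: infinite_finite_induct) auto

interpretation vd: vector_space "\<lambda>(c::complex) (x::vd). (\<lambda>m. c *s x m)"
  by unfold_locales
    (simp_all add: fun_eq_iff vector_add_ldistrib vector_sadd_rdistrib vector_smult_assoc)

definition unit_vd :: "2 \<Rightarrow> nat \<Rightarrow> vd" where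
  "unit_vd i m = (\<lambda>j. if j = m then axis i 1 else 0)"

lemma unit_vd_nth: "unit_vd i m j $ k = (if j = m \<and> k = i then 1 else 0)"
  by (simp add: unit_vd_def axis_def)

lemma inj_unit_vd: "inj (\<lambda>(i, m). unit_vd i m)"
proof (rule injI, clarify)
  fix i m i' m' assume "unit_vd i m = unit_vd i' m'"
  then have "unit_vd i' m' m $ i = unit_vd i m m $ i" by simp
  then have "unit_vd i' m' m $ i = 1" by (simp add: unit_vd_nth)
  then show "i = i' \<and> m = m'" by (simp add: unit_vd_nth split: if_splits)
qed

lemma sum_unit_vd_nth:
  assumes "finite I"
  shows "(\<Sum>p\<in>I. (\<lambda>j. c p *s unit_vd (fst p) (snd p) j)) j $ k = (if (k, j) \<in> I then c (k, j) else 0)"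
proof -
  have "(\<Sum>p\<in>I. (\<lambda>j. c p *s unit_vd (fst p) (snd p) j)) j $ k
      = (\<Sum>p\<in>I. if p = (k, j) then c (k, j) else 0)"
    unfolding sum_fun_apply sum_component by (intro sum.cong) (auto simp: unit_vd_nth)
  then show ?thesis using assms by (simp add: sum.delta')
qed

lemma independent_unit_vd:
  assumes I: "finite I"
  shows "vd.independent ((\<lambda>(i, m). unit_vd i m) ` I)"
proof (rule vd.independent_if_scalars_zero)
  show "finite ((\<lambda>(i, m). unit_vd i m) ` I)" using I by simp
next
  fix f b
  assume sum: "(\<Sum>b\<in>(\<lambda>(i, m). unit_vd i m) ` I. (\<lambda>m. f b *s b m)) = 0"
    and "b \<in> (\<lambda>(i, m). unit_vd i m) ` I"
  then obtain i m where im: "(i, m) \<in> I" "b = unit_vd i m" by auto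
  have "(\<Sum>p\<in>I. (\<lambda>j. f (unit_vd (fst p) (snd p)) *s unit_vd (fst p) (snd p) j)) = 0"
    using sum by (subst (asm) sum.reindex[OF inj_on_subset[OF inj_unit_vd]]) (simp_all add: case_prod_beta)
  then have "(\<Sum>p\<in>I. (\<lambda>j. f (unit_vd (fst p) (snd p)) *s unit_vd (fst p) (snd p) j)) m $ i = 0"
    by simp
  then show "f b = 0" using im by (simp add: sum_unit_vd_nth[OF I])
qed

lemma zpow_Vd_subset_span_unit_vd:
  "zpow_Vd d n \<subseteq> vd.span ((\<lambda>(i, m). unit_vd i m) ` (UNIV \<times> {n..d}))"
proof
  fix y assume y: "y \<in> zpow_Vd d n"
  let ?I = "(UNIV :: 2 set) \<times> {n..d}"
  let ?z = "\<Sum>p\<in>?I. (\<lambda>j. y (snd p) $ fst p *s unit_vd (fst p) (snd p) j)"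
  have "?z \<in> vd.span ((\<lambda>(i, m). unit_vd i m) ` ?I)"
    by (intro vd.span_sum vd.span_scale vd.span_base) auto
  moreover have "?z = y"
  proof (rule ext, subst vec_eq_iff, intro allI)
    fix j k
    show "?z j $ k = y j $ k"
      unfolding sum_unit_vd_nth[OF finite_SigmaI[OF finite finite_atLeastAtMost]]
      using y by (auto simp: zpow_Vd_def Vd_def not_le)
  qed
  ultimately show "y \<in> vd.span ((\<lambda>(i, m). unit_vd i m) ` ?I)" by simp
qed

lemma cdim_zpow_Vd: "cdim (zpow_Vd d n) = 2 * (d + 1 - n)"
proof -
  let ?I = "(UNIV :: 2 set) \<times> {n..d}"
  let ?B = "(\<lambda>(i, m). unit_vd i m) ` ?I"
  have "?B \<subseteq> zpow_Vd d n" by (auto simp: zpow_Vd_def Vd_def unit_vd_def)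
  then have "vd.dim (zpow_Vd d n) = card ?B"
    using vd.basis_card_eq_dim zpow_Vd_subset_span_unit_vd independent_unit_vd by simp
  also have "\<dots> = card ?I" by (rule card_image[OF inj_on_subset[OF inj_unit_vd]]) simp
  finally show ?thesis by (simp add: cdim_def card_cartesian_product)
qed

lemma cdim_gdot:
  assumes "x \<in> Vd d"
  shows "cdim (gdot d x) = 2 * (d + 1 - mindeg d x)"
  by (simp add: gdot_eq_zpow_Vd[OF assms] cdim_zpow_Vd)

theorem corollary3p5:
  fixes d n :: nat
  assumes "n \<le> d + 1"
  shows "orbit d (e1z d n) = {x \<in> Vd d. mindeg d x = n}
       \<and> {x \<in> Vd d. mindeg d x = n} = Vs d (2 * (d + 1 - n))"
proof
  show "orbit d (e1z d n) = {x \<in> Vd d. mindeg d x = n}"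
    using orbit_subset_mindeg[OF assms] orbit_supset_mindeg[OF assms] by blast
  have "2 * (d + 1 - m) = 2 * (d + 1 - n) \<longleftrightarrow> m = n" if "m \<le> d + 1" for m
    using that assms by auto
  then show "{x \<in> Vd d. mindeg d x = n} = Vs d (2 * (d + 1 - n))"
    using cdim_gdot mindeg_le by (auto simp: Vs_def)
qed

end
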